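(* Let $N\ge2$ and let $GHZ_N=|GHZ_N\rangle\langle GHZ_N|$ with $|GHZ_N\rangle=\frac{1}{\sqrt2}(|0\rangle^{\otimes N}+|1\rangle^{\otimes N})$. Then $C_S(GHZ_N)\ge\lceil\frac{N+1}{2}\rceil$.
   Context: $\mathbb{I},\sigma_X,\sigma_Y,\sigma_Z$ are the identity and Pauli matrices. The notation $\sum_\pi \mathbb{I}^{\otimes j}\otimes A^{\otimes (N-j)}$ denotes the sum, over all distinct placements, of tensor products in which exactly $j$ of the $N$ factors are $\mathbb{I}$ and the other $N-j$ are $A$ (each distinct arrangement counted once). Measurement complexity: for an $N$-qubit permutation-invariant operator $\rho$, $C_S(\rho)$ is the minimal $n_A$ such that there exist real $b_i,c_i,d_i$ and real $\alpha_{ij}$ ($1\le i\le n_A$, $0\le j\le N$) with $\rho=\sum_{i=1}^{n_A}\sum_{j=0}^{N}\alpha_{ij}\sum_\pi\mathbb{I}^{\otimes j}\otimes A_i^{\otimes(N-j)}$, $A_i=b_i\sigma_X+c_i\sigma_Y+d_i\sigma_Z$. *)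

theory Defs
  imports Complex_Main
begin

text \<open>Single-qubit operators: 2x2 complex matrices indexed by basis states,
  False = |0>, True = |1>.  N-qubit operators: functions on pairs of
  computational basis strings (bool lists); only strings of length N matter.\<close>

type_synonym qop = "bool \<Rightarrow> bool \<Rightarrow> complex"
type_synonym nop = "bool list \<Rightarrow> bool list \<Rightarrow> complex"

definition id1 :: qop where
  "id1 a b = (if a = b then 1 else 0)"

definition sigmaX :: qop where
  "sigmaX a b = (if a \<noteq> b then 1 else 0)"

definition sigmaY :: qop where
  "sigmaY a b = (if a = b then 0 else if a then \<i> else - \<i>)"

definition sigmaZ :: qop where
  "sigmaZ a b = (if a \<noteq> b then 0 else if a then -1 else 1)"

definition pauli_comb :: "real \<Rightarrow> real \<Rightarrow> real \<Rightarrow> qop" where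
  "pauli_comb b c d x y =
     of_real b * sigmaX x y + of_real c * sigmaY x y + of_real d * sigmaZ x y"

definition tensor :: "nat \<Rightarrow> (nat \<Rightarrow> qop) \<Rightarrow> nop" where
  "tensor N M x y = (\<Prod>k<N. M k (x ! k) (y ! k))"

text \<open>\<Sum>_\<pi> I^{\<otimes> j} \<otimes> A^{\<otimes>(N-j)}: sum over the sets S of positions
  (|S| = j) carrying the identity; each distinct arrangement counted once.\<close>
definition sym_sum :: "nat \<Rightarrow> nat \<Rightarrow> qop \<Rightarrow> nop" where
  "sym_sum N j A x y =
     (\<Sum>S\<in>{S. S \<subseteq> {..<N} \<and> card S = j}.
        tensor N (\<lambda>k. if k \<in> S then id1 else A) x y)"

definition has_decomp :: "nat \<Rightarrow> nop \<Rightarrow> nat \<Rightarrow> bool" where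
  "has_decomp N \<rho> n \<longleftrightarrow>
     (\<exists>(b::nat \<Rightarrow> real) (c::nat \<Rightarrow> real) (d::nat \<Rightarrow> real) (\<alpha>::nat \<Rightarrow> nat \<Rightarrow> real).
        \<forall>x y. length x = N \<longrightarrow> length y = N \<longrightarrow>
          \<rho> x y = (\<Sum>i<n. \<Sum>j\<le>N.
                     of_real (\<alpha> i j) * sym_sum N j (pauli_comb (b i) (c i) (d i)) x y))"

definition meas_complexity :: "nat \<Rightarrow> nop \<Rightarrow> nat" where
  "meas_complexity N \<rho> = (LEAST n. has_decomp N \<rho> n)"

definition ghz_vec :: "nat \<Rightarrow> bool list \<Rightarrow> complex" where
  "ghz_vec N x = (if x = replicate N False \<or> x = replicate N True
                  then of_real (1 / sqrt 2) else 0)"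

definition GHZ :: "nat \<Rightarrow> nop" where
  "GHZ N x y = ghz_vec N x * cnj (ghz_vec N y)"

end

theory Submission
  imports Defs "HOL-Computational_Algebra.Polynomial"
begin

text \<open>In an antidiagonal entry \<open>\<rho> x (map Not x)\<close> of a decomposition only the terms without
  identity factors survive: if \<open>x\<close> has \<open>m\<close> ones, the entry is
  \<open>\<Sum>\<^sub>i \<alpha>\<^sub>i\<^sub>0 w\<^sub>i ^ (N - m) * cnj w\<^sub>i ^ m\<close> with \<open>w\<^sub>i = b\<^sub>i - i c\<^sub>i\<close>.  For GHZ these entries are 1/2
  when \<open>m = 0\<close> or \<open>m = N\<close> and 0 otherwise, i.e. power sums in the ratios \<open>cnj w\<^sub>i / w\<^sub>i\<close> that
  vanish for \<open>0 < m < N\<close> without vanishing at \<open>m = 0\<close>.  The polynomial with these ratios as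
  roots shows that this needs at least \<open>N\<close> directions, and \<open>N \<ge> \<lceil>(N + 1) / 2\<rceil>\<close>.
  Because the complexity is a least element, a decomposition must also be exhibited: \<open>N\<close>
  directions in the XY plane at angles \<open>\<pi> l / N\<close> produce the antidiagonal part through a sum over
  roots of unity, and the directions Z and -Z, summed over all \<open>j\<close>, the two diagonal projectors.\<close>

lemma tensor_if_mem:
  assumes "S \<subseteq> {..<N}"
  shows "tensor N (\<lambda>k. if k \<in> S then A else B) x y
     = (\<Prod>k\<in>S. A (x!k) (y!k)) * (\<Prod>k\<in>{..<N} - S. B (x!k) (y!k))"
proof -
  have "tensor N (\<lambda>k. if k \<in> S then A else B) x y
     = (\<Prod>k\<in>{..<N} \<inter> {k. k \<in> S}. A (x!k) (y!k)) * (\<Prod>k\<in>{..<N} \<inter> - {k. k \<in> S}. B (x!k) (y!k))"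
    unfolding tensor_def by (subst prod.If_cases[symmetric]) (auto intro: prod.cong)
  also have "{..<N} \<inter> {k. k \<in> S} = S" using assms by auto
  also have "{..<N} \<inter> - {k. k \<in> S} = {..<N} - S" by auto
  finally show ?thesis .
qed

lemma sum_sym_sum_eq_tensor:
  "(\<Sum>j\<le>N. sym_sum N j A x y) = tensor N (\<lambda>k a b. id1 a b + A a b) x y"
proof -
  let ?g = "\<lambda>S. (\<Prod>k\<in>S. id1 (x!k) (y!k)) * (\<Prod>k\<in>{..<N} - S. A (x!k) (y!k))"
  have "tensor N (\<lambda>k a b. id1 a b + A a b) x y = (\<Sum>S\<in>Pow {..<N}. ?g S)"
    unfolding tensor_def by (rule prod_add) simp
  also have "Pow {..<N} = (\<Union>j\<le>N. {S. S \<subseteq> {..<N} \<and> card S = j})"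
    by (auto intro: card_mono[of "{..<N}", simplified])
  also have "(\<Sum>S\<in>(\<Union>j\<le>N. {S. S \<subseteq> {..<N} \<and> card S = j}). ?g S)
      = (\<Sum>j\<le>N. \<Sum>S | S \<subseteq> {..<N} \<and> card S = j. ?g S)"
    by (rule sum.UNION_disjoint) auto
  also have "\<dots> = (\<Sum>j\<le>N. sym_sum N j A x y)"
    unfolding sym_sum_def by (intro sum.cong refl) (simp add: tensor_if_mem)
  finally show ?thesis by simp
qed

lemma sym_sum_0: "sym_sum N 0 A = tensor N (\<lambda>_. A)"
proof -
  have "{S. S \<subseteq> {..<N} \<and> card S = 0} = {{}}"
    by (auto dest: finite_subset[of _ "{..<N}"])
  thus ?thesis unfolding sym_sum_def by (simp add: fun_eq_iff)
qed

lemma sym_sum_antidiagonal_eq_0: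
  assumes "j > 0" "length x = N"
  shows "sym_sum N j A x (map Not x) = 0"
  unfolding sym_sum_def
proof (intro sum.neutral ballI)
  fix S assume S: "S \<in> {S. S \<subseteq> {..<N} \<and> card S = j}"
  then obtain k where "k \<in> S" using assms(1) by (cases "S = {}") auto
  moreover have "finite S" using S finite_subset[of S "{..<N}"] by auto
  ultimately have "(\<Prod>k\<in>S. id1 (x!k) (map Not x ! k)) = 0"
    using S assms(2) by (intro prod_zero) (auto simp: id1_def intro!: bexI[of _ k])
  thus "tensor N (\<lambda>k. if k \<in> S then id1 else A) x (map Not x) = 0"
    using S by (simp add: tensor_if_mem)
qed

lemma tensor_const_antidiagonal:
  assumes "length x = N"
  shows "tensor N (\<lambda>_. A) x (map Not x)
     = A False True ^ (N - card {k\<in>{..<N}. x!k}) * A True False ^ card {k\<in>{..<N}. x!k}"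
proof -
  let ?T = "{k\<in>{..<N}. x!k}"
  have "tensor N (\<lambda>_. A) x (map Not x) = (\<Prod>k<N. if x!k then A True False else A False True)"
    unfolding tensor_def using assms by (intro prod.cong) auto
  also have "\<dots> = (\<Prod>k\<in>{..<N} \<inter> {k. x!k}. A True False) * (\<Prod>k\<in>{..<N} \<inter> - {k. x!k}. A False True)"
    by (rule prod.If_cases) simp
  also have "{..<N} \<inter> {k. x!k} = ?T" by auto
  also have "{..<N} \<inter> - {k. x!k} = {..<N} - ?T" by auto
  moreover have "card ({..<N} - ?T) = N - card ?T" by (subst card_Diff_subset) auto
  ultimately show ?thesis by (simp add: mult.commute)
qed

lemma pauli_comb_False_True: "pauli_comb b c d False True = of_real b - \<i> * of_real c"
  unfolding pauli_comb_def sigmaX_def sigmaY_def sigmaZ_def by simp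

lemma pauli_comb_True_False: "pauli_comb b c d True False = of_real b + \<i> * of_real c"
  unfolding pauli_comb_def sigmaX_def sigmaY_def sigmaZ_def by simp

lemma sym_sum_pauli_comb_antidiagonal:
  assumes "length x = N"
  shows "sym_sum N j (pauli_comb b c d) x (map Not x)
     = (if j = 0 then (of_real b - \<i> * of_real c) ^ (N - card {k\<in>{..<N}. x!k})
                      * (of_real b + \<i> * of_real c) ^ card {k\<in>{..<N}. x!k}
        else 0)"
  using assms
  by (simp add: sym_sum_antidiagonal_eq_0 sym_sum_0 tensor_const_antidiagonal
      pauli_comb_False_True pauli_comb_True_False)

lemma card_true_positions_eq_0_iff:
  assumes "length x = N"
  shows "card {k\<in>{..<N}. x!k} = 0 \<longleftrightarrow> x = replicate N False"
proof -
  have "card {k\<in>{..<N}. x!k} = 0 \<longleftrightarrow> {k\<in>{..<N}. x!k} = {}" by simp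
  also have "\<dots> \<longleftrightarrow> x = replicate N False" using assms by (auto simp: list_eq_iff_nth_eq)
  finally show ?thesis .
qed

lemma card_true_positions_eq_length_iff:
  assumes "length x = N"
  shows "card {k\<in>{..<N}. x!k} = N \<longleftrightarrow> x = replicate N True"
proof -
  have "card {k\<in>{..<N}. x!k} = N \<longleftrightarrow> {k\<in>{..<N}. x!k} = {..<N}"
  proof
    assume "card {k\<in>{..<N}. x!k} = N"
    thus "{k\<in>{..<N}. x!k} = {..<N}" by (intro card_subset_eq) auto
  qed simp
  also have "\<dots> \<longleftrightarrow> x = replicate N True"
    using assms by (auto simp: list_eq_iff_nth_eq)
  finally show ?thesis .
qed

lemma GHZ_eq:
  "GHZ N x y = (if (x = replicate N False \<or> x = replicate N True) \<and>
                   (y = replicate N False \<or> y = replicate N True) then 1/2 else 0)"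
proof -
  have half: "1 / sqrt 2 * (1 / sqrt 2) = (1/2 :: real)" by simp
  have "complex_of_real (1 / sqrt 2) * cnj (complex_of_real (1 / sqrt 2)) = 1/2"
    by (simp only: complex_cnj_complex_of_real half flip: of_real_mult) simp
  thus ?thesis unfolding GHZ_def ghz_vec_def by auto
qed

lemma GHZ_antidiagonal:
  assumes "length x = N"
  shows "GHZ N x (map Not x)
     = (if card {k\<in>{..<N}. x!k} = 0 \<or> card {k\<in>{..<N}. x!k} = N then 1/2 else 0)"
proof -
  have "map Not x = replicate N b \<longleftrightarrow> x = replicate N (\<not> b)" for b
    using assms by (auto simp: list_eq_iff_nth_eq)
  hence "(map Not x = replicate N False \<or> map Not x = replicate N True)
      \<longleftrightarrow> (x = replicate N False \<or> x = replicate N True)"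
    by auto
  thus ?thesis
    unfolding GHZ_eq card_true_positions_eq_0_iff[OF assms] card_true_positions_eq_length_iff[OF assms]
    by simp
qed

lemma obtain_card_true_positions:
  assumes "m \<le> N"
  obtains x :: "bool list" where "length x = N" "card {k\<in>{..<N}. x!k} = m"
proof
  let ?x = "replicate (N - m) False @ replicate m True"
  show "length ?x = N" using assms by simp
  have "{k\<in>{..<N}. ?x!k} = {N - m..<N}"
    using assms by (auto simp: nth_append)
  thus "card {k\<in>{..<N}. ?x!k} = m" using assms by simp
qed

lemma power_sums_vanish_imp_sum_eq_0:
  fixes c \<rho> :: "'a \<Rightarrow> 'b::idom"
  assumes fin: "finite I" and nz: "\<And>i. i \<in> I \<Longrightarrow> \<rho> i \<noteq> 0"
    and vanish: "\<And>m. 1 \<le> m \<Longrightarrow> m \<le> card I \<Longrightarrow> (\<Sum>i\<in>I. c i * \<rho> i ^ m) = 0"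
  shows "(\<Sum>i\<in>I. c i) = 0"
proof -
  define Q where "Q = (\<Prod>i\<in>I. [:- \<rho> i, 1:])"
  have poly_Q: "poly Q z = (\<Prod>i\<in>I. z - \<rho> i)" for z
    unfolding Q_def by (simp add: poly_prod)
  have deg_Q: "degree Q \<le> card I"
    using degree_prod_sum_le[OF fin, of "\<lambda>i. [:- \<rho> i, 1:]"] by (simp add: Q_def o_def)
  have poly_Q_expand: "poly Q z = (\<Sum>k\<le>card I. coeff Q k * z ^ k)" for z
    unfolding poly_altdef
    by (rule sum.mono_neutral_left) (use deg_Q in \<open>auto simp: coeff_eq_0\<close>)
  have "0 = (\<Sum>i\<in>I. c i * poly Q (\<rho> i))"
    by (intro sum.neutral[symmetric]) (auto simp: poly_Q fin intro!: prod_zero)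
  also have "\<dots> = (\<Sum>k\<le>card I. coeff Q k * (\<Sum>i\<in>I. c i * \<rho> i ^ k))"
    unfolding poly_Q_expand sum_distrib_left by (subst sum.swap) (simp add: mult_ac)
  also have "\<dots> = coeff Q 0 * (\<Sum>i\<in>I. c i)"
    by (subst sum.mono_neutral_right[of "{..card I}" "{0}"]) (auto simp: vanish)
  finally have "coeff Q 0 * (\<Sum>i\<in>I. c i) = 0" ..
  moreover have "coeff Q 0 = (\<Prod>i\<in>I. - \<rho> i)"
    using poly_Q[of 0] by (simp add: poly_0_coeff_0)
  ultimately show ?thesis
    using fin nz by (simp add: prod_zero_iff)
qed

lemma mixed_power_sums_imp_ge:
  fixes a w :: "nat \<Rightarrow> complex"
  assumes sums: "\<And>m. m \<le> N \<Longrightarrow>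
      (\<Sum>i<n. a i * (w i ^ (N - m) * cnj (w i) ^ m)) = (if m = 0 \<or> m = N then 1/2 else 0)"
  shows "N \<le> n"
proof (rule ccontr)
  assume "\<not> N \<le> n"
  hence "n < N" by simp
  define I where "I = {i. i < n \<and> w i \<noteq> 0}"
  have power_sums: "(\<Sum>i\<in>I. a i * w i ^ N * (cnj (w i) / w i) ^ m) = (if m = 0 \<or> m = N then 1/2 else 0)"
    if "m \<le> N" for m
  proof -
    have "(\<Sum>i<n. a i * (w i ^ (N - m) * cnj (w i) ^ m)) = (\<Sum>i\<in>I. a i * w i ^ N * (cnj (w i) / w i) ^ m)"
    proof (rule sum.mono_neutral_cong_right)
      show "\<forall>i\<in>{..<n} - I. a i * (w i ^ (N - m) * cnj (w i) ^ m) = 0"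
        using \<open>n < N\<close> that by (auto simp: I_def zero_power)
      show "a i * (w i ^ (N - m) * cnj (w i) ^ m) = a i * w i ^ N * (cnj (w i) / w i) ^ m"
        if "i \<in> I" for i
      proof -
        have "w i ^ N = w i ^ (N - m) * w i ^ m" using \<open>m \<le> N\<close> by (simp flip: power_add)
        thus ?thesis using that by (simp add: I_def power_divide)
      qed
    qed (auto simp: I_def)
    thus ?thesis using sums[OF that] by simp
  qed
  have "card I \<le> card {..<n}" unfolding I_def by (intro card_mono) auto
  have "(\<Sum>i\<in>I. a i * w i ^ N) = 0"
  proof (rule power_sums_vanish_imp_sum_eq_0[where \<rho> = "\<lambda>i. cnj (w i) / w i"])
    show "finite I" by (simp add: I_def)
    show "cnj (w i) / w i \<noteq> 0" if "i \<in> I" for i using that by (simp add: I_def)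
    show "(\<Sum>i\<in>I. a i * w i ^ N * (cnj (w i) / w i) ^ m) = 0" if "1 \<le> m" "m \<le> card I" for m
      using power_sums[of m] that \<open>card I \<le> card {..<n}\<close> \<open>n < N\<close> by simp
  qed
  moreover have "(\<Sum>i\<in>I. a i * w i ^ N) = 1/2" using power_sums[of 0] by simp
  ultimately show False by simp
qed

lemma has_decomp_GHZ_imp_ge:
  assumes "has_decomp N (GHZ N) n"
  shows "N \<le> n"
proof -
  obtain b c d \<alpha> where dec: "\<And>x y. length x = N \<Longrightarrow> length y = N \<Longrightarrow>
      GHZ N x y = (\<Sum>i<n. \<Sum>j\<le>N. of_real (\<alpha> i j) * sym_sum N j (pauli_comb (b i) (c i) (d i)) x y)"
    using assms unfolding has_decomp_def by blast
  define w where "w i = of_real (b i) - \<i> * of_real (c i)" for i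
  show ?thesis
  proof (rule mixed_power_sums_imp_ge[where a = "\<lambda>i. of_real (\<alpha> i 0)" and w = w])
    fix m assume "m \<le> N"
    then obtain x where x: "length x = N" "card {k\<in>{..<N}. x!k} = m"
      by (rule obtain_card_true_positions)
    have "(\<Sum>i<n. of_real (\<alpha> i 0) * (w i ^ (N - m) * cnj (w i) ^ m)) = GHZ N x (map Not x)"
      using x by (simp add: dec w_def sym_sum_pauli_comb_antidiagonal if_distrib[of "\<lambda>z. _ * z"]
          sum.delta cong: if_cong)
    also have "\<dots> = (if m = 0 \<or> m = N then 1/2 else 0)"
      by (simp only: GHZ_antidiagonal[OF x(1)] x(2))
    finally show "(\<Sum>i<n. of_real (\<alpha> i 0) * (w i ^ (N - m) * cnj (w i) ^ m))
      = (if m = 0 \<or> m = N then 1/2 else 0)" .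
  qed
qed

lemma tensor_const_eq_0_off_antidiagonal:
  assumes "length x = N" "length y = N" "y \<noteq> map Not x" "\<And>a. A a a = 0"
  shows "tensor N (\<lambda>_. A) x y = 0"
proof -
  obtain k where "k < N" "y!k = x!k"
    using assms(1-3) by (auto simp: list_eq_iff_nth_eq)
  thus ?thesis unfolding tensor_def
    using assms(4) by (intro prod_zero) (auto intro!: bexI[of _ k])
qed

lemma tensor_const_eq_replicate:
  assumes A: "\<And>a a'. A a a' = (if a = s \<and> a' = s then 2 else 0)"
    and "length x = N" "length y = N"
  shows "tensor N (\<lambda>_. A) x y = (if x = replicate N s \<and> y = replicate N s then 2 ^ N else 0)"
proof (cases "x = replicate N s \<and> y = replicate N s")
  case True
  thus ?thesis unfolding tensor_def by (simp add: A)
next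
  case False
  then obtain k where "k < N" "x!k \<noteq> s \<or> y!k \<noteq> s"
    using assms(2,3) by (auto simp: list_eq_iff_nth_eq)
  hence "tensor N (\<lambda>_. A) x y = 0" unfolding tensor_def
    by (intro prod_zero) (auto simp: A intro!: bexI[of _ k])
  thus ?thesis using False by simp
qed

lemma id1_plus_pauli_Z_sign:
  "id1 a a' + pauli_comb 0 0 (if s then -1 else 1) a a' = (if a = s \<and> a' = s then 2 else 0)"
  unfolding id1_def pauli_comb_def sigmaX_def sigmaY_def sigmaZ_def by auto

lemma sum_sym_sum_pauli_Z_sign:
  assumes "length x = N" "length y = N"
  shows "(\<Sum>j\<le>N. sym_sum N j (pauli_comb 0 0 (if s then -1 else 1)) x y)
     = (if x = replicate N s \<and> y = replicate N s then 2 ^ N else 0)"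
  unfolding sum_sym_sum_eq_tensor
  by (rule tensor_const_eq_replicate[OF id1_plus_pauli_Z_sign assms])

lemma sum_cis_roots_of_unity_power:
  assumes "N > 0" "m \<le> N"
  shows "(\<Sum>l<N. cis (2 * pi * real l * real m / real N)) = (if m = 0 \<or> m = N then of_nat N else 0)"
proof -
  define z where "z = cis (2 * pi * real m / real N)"
  have cis_eq_power: "cis (2 * pi * real l * real m / real N) = z ^ l" for l
    unfolding z_def DeMoivre by (simp add: field_simps)
  show ?thesis
  proof (cases "m = 0 \<or> m = N")
    case True
    hence "z = 1" unfolding z_def using assms by auto
    thus ?thesis unfolding cis_eq_power using True by simp
  next
    case False
    have "z ^ N = cis (2 * pi * real m)"
      unfolding z_def DeMoivre using assms by (simp add: field_simps)
    also have "\<dots> = 1" by (rule cis_multiple_2pi) simp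
    finally have "z ^ N = 1" .
    moreover have "z \<noteq> 1"
    proof
      assume "z = 1"
      hence "cos (2 * pi * real m / real N) = 1" by (simp add: z_def complex_eq_iff)
      then obtain k :: int where "2 * pi * real m / real N = of_int k * 2 * pi"
        unfolding cos_one_2pi_int by blast
      hence "of_int k = real m / real N" using assms(1) by (simp add: field_simps)
      moreover have "0 < real m / real N" "real m / real N < 1"
        using False assms by auto
      ultimately have "0 < k" "k < 1" by linarith+
      thus False by simp
    qed
    ultimately show ?thesis unfolding cis_eq_power using False by (simp add: sum_gp_strict)
  qed
qed

text \<open>The sign \<open>(-1) ^ l\<close> cancels the phase \<open>cis (- \<pi> l)\<close> common to all antidiagonal entries of
  the \<open>l\<close>-th term, leaving the \<open>l\<close>-th power of the root of unity \<open>cis (2 \<pi> m / N)\<close>.\<close>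

lemma phase_average_eq_GHZ_antidiagonal:
  assumes "N > 0" "length x = N" "length y = N"
  shows "(\<Sum>l<N. of_real ((-1) ^ l / (2 * real N)) *
            sym_sum N 0 (pauli_comb (cos (pi * real l / real N)) (sin (pi * real l / real N)) 0) x y)
       = (if y = map Not x then GHZ N x y else 0)"
proof (cases "y = map Not x")
  case False
  have "pauli_comb b c 0 a a = 0" for b c a
    unfolding pauli_comb_def sigmaX_def sigmaY_def sigmaZ_def by simp
  thus ?thesis using tensor_const_eq_0_off_antidiagonal[OF assms(2,3) False] False
    by (simp add: sym_sum_0)
next
  case True
  define m where "m = card {k\<in>{..<N}. x!k}"
  have "m \<le> card {..<N}" unfolding m_def by (intro card_mono) auto
  hence "m \<le> N" by simp
  have term_eq: "of_real ((-1) ^ l / (2 * real N)) *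
            sym_sum N 0 (pauli_comb (cos (pi * real l / real N)) (sin (pi * real l / real N)) 0) x y
       = cis (2 * pi * real l * real m / real N) / (2 * of_nat N)" for l
  proof -
    define \<theta> where "\<theta> = pi * real l / real N"
    have "of_real (cos \<theta>) - \<i> * of_real (sin \<theta>) = cis (- \<theta>)"
      and "of_real (cos \<theta>) + \<i> * of_real (sin \<theta>) = cis \<theta>"
      by (simp_all add: complex_eq_iff)
    hence "sym_sum N 0 (pauli_comb (cos \<theta>) (sin \<theta>) 0) x y = cis (real (N - m) * (- \<theta>) + real m * \<theta>)"
      using assms(2) by (simp add: True sym_sum_pauli_comb_antidiagonal m_def DeMoivre cis_mult)
    moreover have "(-1 :: complex) ^ l = cis (real l * pi)"
      by (simp flip: DeMoivre)
    ultimately have "of_real ((-1) ^ l / (2 * real N)) * sym_sum N 0 (pauli_comb (cos \<theta>) (sin \<theta>) 0) x y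
        = cis (real l * pi + (real (N - m) * (- \<theta>) + real m * \<theta>)) / (2 * of_nat N)"
      by (simp add: cis_mult[symmetric])
    also have "real l * pi + (real (N - m) * (- \<theta>) + real m * \<theta>) = 2 * pi * real l * real m / real N"
      unfolding \<theta>_def using assms(1) \<open>m \<le> N\<close> by (simp add: of_nat_diff field_simps)
    finally show ?thesis unfolding \<theta>_def .
  qed
  have "(\<Sum>l<N. of_real ((-1) ^ l / (2 * real N)) *
            sym_sum N 0 (pauli_comb (cos (pi * real l / real N)) (sin (pi * real l / real N)) 0) x y)
      = (\<Sum>l<N. cis (2 * pi * real l * real m / real N)) / (2 * of_nat N)"
    by (simp only: term_eq sum_divide_distrib)
  also have "\<dots> = (if m = 0 \<or> m = N then 1/2 else 0)"
    using assms(1) \<open>m \<le> N\<close> by (simp add: sum_cis_roots_of_unity_power)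
  also have "\<dots> = GHZ N x y"
    by (simp only: True GHZ_antidiagonal[OF assms(2)] m_def)
  finally show ?thesis using True by simp
qed

lemma has_decomp_GHZ:
  assumes "N > 0"
  shows "has_decomp N (GHZ N) (N + 2)"
  unfolding has_decomp_def
proof (intro exI allI impI)
  fix x y :: "bool list"
  assume x: "length x = N" and y: "length y = N"
  define b where "b i = (if i < N then cos (pi * real i / real N) else 0)" for i :: nat
  define c where "c i = (if i < N then sin (pi * real i / real N) else 0)" for i
  define d where "d i = (if i < N then 0 else if i = N then 1 else - 1 :: real)" for i
  define \<alpha> where "\<alpha> i j = (if i < N then if j = 0 then (-1) ^ i / (2 * real N) else 0
      else 1 / 2 ^ (N + 1))" for i j :: nat
  define F where "F i = (\<Sum>j\<le>N. of_real (\<alpha> i j) * sym_sum N j (pauli_comb (b i) (c i) (d i)) x y)" for i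
  have F_phase: "F i = of_real ((-1) ^ i / (2 * real N)) *
      sym_sum N 0 (pauli_comb (cos (pi * real i / real N)) (sin (pi * real i / real N)) 0) x y"
    if "i < N" for i
  proof -
    have "F i = (\<Sum>j\<le>N. if j = 0 then of_real ((-1) ^ i / (2 * real N)) *
      sym_sum N 0 (pauli_comb (cos (pi * real i / real N)) (sin (pi * real i / real N)) 0) x y else 0)"
      unfolding F_def using that by (intro sum.cong) (auto simp: \<alpha>_def b_def c_def d_def)
    thus ?thesis by simp
  qed
  have F_Z: "F (if s then N + 1 else N) = (if x = replicate N s \<and> y = replicate N s then 1/2 else 0)"
    for s
  proof -
    have "F (if s then N + 1 else N)
        = of_real (1 / 2 ^ (N + 1)) * (\<Sum>j\<le>N. sym_sum N j (pauli_comb 0 0 (if s then -1 else 1)) x y)"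
      by (simp add: F_def \<alpha>_def b_def c_def d_def sum_distrib_left)
    thus ?thesis by (simp add: sum_sym_sum_pauli_Z_sign[OF x y])
  qed
  have "(\<Sum>i<N. F i) = (\<Sum>i<N. of_real ((-1) ^ i / (2 * real N)) *
      sym_sum N 0 (pauli_comb (cos (pi * real i / real N)) (sin (pi * real i / real N)) 0) x y)"
    by (rule sum.cong) (simp_all add: F_phase)
  also have "\<dots> = (if y = map Not x then GHZ N x y else 0)"
    by (rule phase_average_eq_GHZ_antidiagonal[OF assms x y])
  finally have F_phases: "(\<Sum>i<N. F i) = (if y = map Not x then GHZ N x y else 0)" .
  have "(\<Sum>i<N + 2. F i) = (\<Sum>i<N. F i) + F N + F (N + 1)"
    by (simp add: add.assoc)
  also have "\<dots> = (if y = map Not x then GHZ N x y else 0)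
      + (if x = replicate N False \<and> y = replicate N False then 1/2 else 0)
      + (if x = replicate N True \<and> y = replicate N True then 1/2 else 0)"
    using F_phases F_Z[of False] F_Z[of True] by simp
  also have "\<dots> = GHZ N x y"
  proof -
    have "map Not x \<noteq> x" using assms x by (cases x) auto
    thus ?thesis by (auto simp: GHZ_eq)
  qed
  finally show "GHZ N x y = (\<Sum>i<N + 2. F i)" ..
qed

theorem theorem4:
  fixes N :: nat
  assumes "N \<ge> 2"
  shows "int (meas_complexity N (GHZ N)) \<ge> \<lceil>(real N + 1) / 2\<rceil>"
proof -
  have "has_decomp N (GHZ N) (meas_complexity N (GHZ N))"
    unfolding meas_complexity_def
    by (rule LeastI_ex) (use has_decomp_GHZ assms in \<open>auto intro!: exI[of _ "N + 2"]\<close>)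
  hence "N \<le> meas_complexity N (GHZ N)" by (rule has_decomp_GHZ_imp_ge)
  moreover have "\<lceil>(real N + 1) / 2\<rceil> \<le> int N"
    unfolding ceiling_le_iff using assms by simp
  ultimately show ?thesis by linarith
qed

end
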